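(* Let $n\ge 2$ be an integer and $A\subseteq L_n$. The following are equivalent: (i) $(X_n,\tau(A))$ is hereditarily Lindelöf; (ii) $|L_n\setminus A|\le\aleph_0$; (iii) $(X_n,\tau(A))$ is second-countable; (iv) $(X_n,\tau(A))$ is metrizable.
   Context: For $\overline{x},\overline{a}\in\mathbb R^n$ let $|\overline{x}-\overline{a}|$ be the Euclidean distance and $B(\overline{a},\epsilon)=\{\overline{x}\in\mathbb R^n:|\overline{x}-\overline{a}|<\epsilon\}$. Let $P_n=\{\overline{x}\in\mathbb R^n: x_n>0\}$, $L_n=\{\overline{x}\in\mathbb R^n: x_n=0\}$, $X_n=P_n\cup L_n$. For $\overline{a}\in L_n$ and $\epsilon>0$ put $\overline{a(\epsilon)}=(a_1,\dots,a_{n-1},\epsilon)$ and $\tilde B(\overline{a},\epsilon)=\{\overline{a}\}\cup B(\overline{a(\epsilon)},\epsilon)$. For $A\subseteq L_n$, the topology $\tau(A)$ on $X_n$ is generated by the local bases: at $\overline{a}\in P_n$, the sets $B(\overline{a},\epsilon)$ with $0<\epsilon<a_n$; at $\overline{a}\in A$, the sets $B(\overline{a},\epsilon)\cap X_n$ with $\epsilon>0$; at $\overline{a}\in L_n\setminus A$, the sets $\tilde B(\overline{a},\epsilon)$ with $\epsilon>0$. *)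

theory Defs
  imports "HOL-Analysis.Analysis"
begin

text \<open>We model Euclidean space R^n (n >= 2) as the product (real^'m) \<times> real, where
  CARD('m) = n - 1 >= 1.  The product metric on this type is exactly the Euclidean
  distance of R^n, and the last coordinate x_n is the second component.\<close>

definition Pn :: "((real^'m) \<times> real) set" where
  "Pn = {x. snd x > 0}"

definition Ln :: "((real^'m) \<times> real) set" where
  "Ln = {x. snd x = 0}"

definition Xn :: "((real^'m) \<times> real) set" where
  "Xn = Pn \<union> Ln"

definition tball :: "(real^'m) \<times> real \<Rightarrow> real \<Rightarrow> ((real^'m) \<times> real) set" where
  "tball a e = insert a (ball (fst a, e) e)"

definition basic_nbhd ::
  "((real^'m) \<times> real) set \<Rightarrow> (real^'m) \<times> real \<Rightarrow> ((real^'m) \<times> real) set \<Rightarrow> bool" where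
  "basic_nbhd A a V \<longleftrightarrow>
     (a \<in> Pn \<and> (\<exists>e. 0 < e \<and> e < snd a \<and> V = ball a e)) \<or>
     (a \<in> A \<and> (\<exists>e>0. V = ball a e \<inter> Xn)) \<or>
     (a \<in> Ln - A \<and> (\<exists>e>0. V = tball a e))"

definition tauA :: "((real^'m) \<times> real) set \<Rightarrow> ((real^'m) \<times> real) topology" where
  "tauA A = topology (\<lambda>U. U \<subseteq> Xn \<and> (\<forall>x\<in>U. \<exists>V. basic_nbhd A x V \<and> V \<subseteq> U))"

definition hereditarily_Lindelof :: "'a topology \<Rightarrow> bool" where
  "hereditarily_Lindelof X \<longleftrightarrow> (\<forall>S \<subseteq> topspace X. Lindelof_space (subtopology X S))"

end

theory Submission
  imports Defs
begin

text \<open>A point \<open>a \<in> Ln - A\<close> is isolated in \<open>Ln - A\<close>, because the tangent ball \<open>tball a e\<close>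
  meets \<open>Ln\<close> only in \<open>a\<close>; hence a hereditarily Lindelof space forces \<open>Ln - A\<close> to be
  countable. Conversely, if \<open>Ln - A\<close> is countable, the traces on \<open>Xn\<close> of a countable
  Euclidean base together with the tangent balls of radii \<open>1 / (k + 1)\<close> at the points of
  \<open>Ln - A\<close> form a countable base. The space is \<open>T\<^sub>1\<close> and regular, because inside \<open>Xn\<close>
  the Euclidean closure of a basic neighbourhood lies in the basic neighbourhood of twice the
  radius, so Urysohn's metrization theorem applies. Finally every open set contains a
  Euclidean ball, so the space is separable, and a separable metrizable space is second
  countable.\<close>

section \<open>Countability and metrizability of abstract spaces\<close>

lemma second_countable_imp_hereditarily_Lindelof:
  "second_countable X \<Longrightarrow> hereditarily_Lindelof X"
  by (simp add: hereditarily_Lindelof_def second_countable_imp_Lindelof_space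
      second_countable_subtopology)

lemma Lindelof_space_discrete_topology:
  "Lindelof_space (discrete_topology S) \<longleftrightarrow> countable S"
proof
  assume "Lindelof_space (discrete_topology S)"
  then obtain \<V> where "countable \<V>" "\<V> \<subseteq> (\<lambda>x. {x}) ` S" "\<Union>\<V> = S"
    using Lindelof_spaceD[of "discrete_topology S" "(\<lambda>x. {x}) ` S"] by auto
  moreover have "\<forall>V\<in>\<V>. countable V"
    using \<open>\<V> \<subseteq> (\<lambda>x. {x}) ` S\<close> by auto
  ultimately show "countable S"
    using countable_UN[of \<V> "\<lambda>V. V"] by simp
qed (simp add: countable_imp_Lindelof_space)

lemma separable_metrizable_imp_second_countable:
  assumes "metrizable_space X" "separable_space X"
  shows "second_countable X"
proof -
  obtain M d where "Metric_space M d" and X: "X = Metric_space.mtopology M d"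
    using assms(1) unfolding metrizable_space_def by blast
  interpret Metric_space M d by fact
  obtain C where C: "countable C" "C \<subseteq> M" "mtopology closure_of C = M"
    using assms(2) unfolding separable_space_def X by auto
  define \<B> where "\<B> = (\<lambda>(c, k). mball c (inverse (Suc k))) ` (C \<times> (UNIV :: nat set))"
  have "\<exists>B\<in>\<B>. x \<in> B \<and> B \<subseteq> U" if "openin mtopology U" "x \<in> U" for U x
  proof -
    obtain r where "r > 0" "mball x r \<subseteq> U"
      using \<open>openin mtopology U\<close> \<open>x \<in> U\<close> openin_mtopology by blast
    then obtain k :: nat where k: "inverse (Suc k) < r / 2"
      using reals_Archimedean[of "r / 2"] by auto
    have "x \<in> M"
      using \<open>openin mtopology U\<close> \<open>x \<in> U\<close> openin_subset by fastforce
    then have "x \<in> mball x (inverse (Suc k))" "x \<in> mtopology closure_of C"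
      using C(3) by auto
    then obtain c where c: "c \<in> C" "c \<in> mball x (inverse (Suc k))"
      by (meson in_closure_of openin_mball)
    have "mball c (inverse (Suc k)) \<subseteq> mball x r"
      using c k \<open>x \<in> M\<close> by (intro mball_subset) (auto simp: commute)
    moreover have "x \<in> mball c (inverse (Suc k))"
      using c by (auto simp: commute)
    ultimately show ?thesis
      using c \<open>mball x r \<subseteq> U\<close> unfolding \<B>_def by blast
  qed
  moreover have "countable \<B>"
    unfolding \<B>_def using C(1) by simp
  moreover have "\<forall>B\<in>\<B>. openin mtopology B"
    unfolding \<B>_def by auto
  ultimately show ?thesis
    unfolding second_countable_def X by blast
qed

lemma inj_on_separating_functions:
  fixes f :: "'i \<Rightarrow> 'a \<Rightarrow> real"
  assumes "t0_space X"
    and sep: "\<And>U x. \<lbrakk>openin X U; x \<in> U\<rbrakk> \<Longrightarrow>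
                \<exists>i\<in>I. f i x = 0 \<and> (\<forall>y \<in> topspace X - U. f i y = 1)"
  shows "inj_on (\<lambda>x. \<lambda>i\<in>I. f i x) (topspace X)"
proof (rule inj_onI, rule ccontr)
  have separated: "(\<lambda>i\<in>I. f i x) \<noteq> (\<lambda>i\<in>I. f i y)"
    if U: "openin X U" "x \<in> U" "y \<in> topspace X - U" for x y U
  proof -
    obtain i where "i \<in> I" "f i x = 0" "f i y = 1"
      using sep[OF U(1,2)] U(3) by blast
    then have "(\<lambda>i\<in>I. f i x) i \<noteq> (\<lambda>i\<in>I. f i y) i"
      by simp
    then show ?thesis
      by metis
  qed
  fix x y assume "x \<in> topspace X" "y \<in> topspace X" "(\<lambda>i\<in>I. f i x) = (\<lambda>i\<in>I. f i y)" "x \<noteq> y"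
  then obtain U where "openin X U" "x \<notin> U \<longleftrightarrow> y \<in> U"
    using \<open>t0_space X\<close> unfolding t0_space_def by blast
  then show False
    using separated[of U x y] separated[of U y x] \<open>x \<in> topspace X\<close> \<open>y \<in> topspace X\<close>
      \<open>(\<lambda>i\<in>I. f i x) = (\<lambda>i\<in>I. f i y)\<close>
    by (metis DiffI)
qed

lemma open_map_separating_functions:
  fixes f :: "'i \<Rightarrow> 'a \<Rightarrow> real" and I :: "'i set"
  defines "F \<equiv> \<lambda>x. \<lambda>i\<in>I. f i x"
  assumes cont: "\<And>i. i \<in> I \<Longrightarrow> continuous_map X euclideanreal (f i)"
    and sep: "\<And>U x. \<lbrakk>openin X U; x \<in> U\<rbrakk> \<Longrightarrow>
                \<exists>i\<in>I. f i x = 0 \<and> (\<forall>y \<in> topspace X - U. f i y = 1)"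
  shows "open_map X (subtopology (product_topology (\<lambda>_. euclideanreal) I) (F ` topspace X)) F"
  unfolding open_map_def
proof (intro allI impI)
  define Y where "Y = product_topology (\<lambda>_. euclideanreal :: real topology) I"
  fix U assume "openin X U"
  show "openin (subtopology Y (F ` topspace X)) (F ` U)"
  proof (subst openin_subopen, intro ballI)
    fix z assume "z \<in> F ` U"
    then obtain x where "x \<in> U" "z = F x"
      by blast
    then obtain i where i: "i \<in> I" "f i x = 0" "\<forall>y \<in> topspace X - U. f i y = 1"
      using sep[OF \<open>openin X U\<close>] by blast
    define T where "T = {w \<in> topspace Y. w i < 1} \<inter> F ` topspace X"
    have "openin Y {w \<in> topspace Y. w i \<in> {..<1}}"
      unfolding Y_def
      by (rule openin_continuous_map_preimage[OF continuous_map_product_projection[OF \<open>i \<in> I\<close>]]) auto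
    then have "openin (subtopology Y (F ` topspace X)) T"
      unfolding T_def lessThan_iff by (rule openin_subtopology_Int)
    moreover have "z \<in> T"
    proof -
      have "x \<in> topspace X"
        using \<open>openin X U\<close> \<open>x \<in> U\<close> openin_subset by blast
      then have "F x \<in> topspace Y"
        using cont unfolding Y_def F_def by (simp add: PiE_iff continuous_map_def)
      then show ?thesis
        using \<open>x \<in> topspace X\<close> \<open>z = F x\<close> i unfolding T_def F_def by auto
    qed
    moreover have "T \<subseteq> F ` U"
    proof
      fix w assume "w \<in> T"
      then obtain y where y: "y \<in> topspace X" "w = F y" "f i y < 1"
        using \<open>i \<in> I\<close> unfolding T_def F_def by auto
      then have "y \<in> U"
        using i(3) by (metis DiffI less_irrefl)
      then show "w \<in> F ` U"
        using y by blast
    qed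
    ultimately show "\<exists>T. openin (subtopology Y (F ` topspace X)) T \<and> z \<in> T \<and> T \<subseteq> F ` U"
      by blast
  qed
qed

lemma embedding_map_separating_functions:
  assumes "t0_space X"
    and cont: "\<And>i. i \<in> I \<Longrightarrow> continuous_map X euclideanreal (f i)"
    and sep: "\<And>U x. \<lbrakk>openin X U; x \<in> U\<rbrakk> \<Longrightarrow>
                \<exists>i\<in>I. f i x = 0 \<and> (\<forall>y \<in> topspace X - U. f i y = 1)"
  shows "embedding_map X (product_topology (\<lambda>_. euclideanreal) I) (\<lambda>x. \<lambda>i\<in>I. f i x)"
proof -
  have "continuous_map X (product_topology (\<lambda>_. euclideanreal) I) (\<lambda>x. \<lambda>i\<in>I. f i x)"
    using cont by (auto simp: continuous_map_componentwise)
  then show ?thesis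
    using injective_open_imp_embedding_map[OF _ open_map_separating_functions[OF cont sep]
        inj_on_separating_functions[OF assms(1) sep]]
    by (simp add: embedding_map_in_subtopology continuous_map_in_subtopology)
qed

lemma regular_space_base_closure_pair:
  assumes "regular_space X" and open_\<B>: "\<forall>B\<in>\<B>. openin X B"
    and base: "\<forall>U x. openin X U \<and> x \<in> U \<longrightarrow> (\<exists>B\<in>\<B>. x \<in> B \<and> B \<subseteq> U)"
    and "openin X U" "x \<in> U"
  obtains B B' where "B \<in> \<B>" "B' \<in> \<B>" "x \<in> B" "X closure_of B \<subseteq> B'" "B' \<subseteq> U"
proof -
  obtain B' where B': "B' \<in> \<B>" "x \<in> B'" "B' \<subseteq> U"
    using base[rule_format, OF conjI[OF assms(4,5)]] by blast
  have "openin X B'"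
    using open_\<B> B'(1) by blast
  then obtain V C where "openin X V" "closedin X C" "x \<in> V" "V \<subseteq> C" "C \<subseteq> B'"
    using assms(1) neighbourhood_base_of_closedin[of X] B'(2) unfolding neighbourhood_base_of by blast
  obtain B where B: "B \<in> \<B>" "x \<in> B" "B \<subseteq> V"
    using base[rule_format, OF conjI[OF \<open>openin X V\<close> \<open>x \<in> V\<close>]] by blast
  have "X closure_of B \<subseteq> C"
    using B(3) \<open>V \<subseteq> C\<close> \<open>closedin X C\<close> by (simp add: closure_of_minimal)
  then show ?thesis
    using that B B' \<open>C \<subseteq> B'\<close> by blast
qed

lemma Urysohn_function_closure_of_subset:
  assumes "normal_space X" "openin X V" "X closure_of S \<subseteq> V"
  obtains g where "continuous_map X euclideanreal g"
    "g ` (X closure_of S) \<subseteq> {0}" "g ` (topspace X - V) \<subseteq> {1}"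
proof -
  have "closedin X (topspace X - V)"
    using assms(2) by (simp add: closedin_diff)
  moreover have "disjnt (X closure_of S) (topspace X - V)"
    using assms(3) by (auto simp: disjnt_def)
  ultimately show ?thesis
    using that Urysohn_lemma_alt[OF assms(1) closedin_closure_of] by metis
qed

lemma regular_second_countable_separating_functions:
  fixes X :: "'a topology"
  assumes "regular_space X" "second_countable X"
  obtains P :: "('a set \<times> 'a set) set" and f where "countable P"
    "\<And>p. p \<in> P \<Longrightarrow> continuous_map X euclideanreal (f p)"
    "\<And>U x. \<lbrakk>openin X U; x \<in> U\<rbrakk> \<Longrightarrow> \<exists>p\<in>P. f p x = 0 \<and> (\<forall>y \<in> topspace X - U. f p y = 1)"
proof -
  obtain \<B> where "countable \<B>" and open_\<B>: "\<forall>B\<in>\<B>. openin X B"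
    and base: "\<forall>U x. openin X U \<and> x \<in> U \<longrightarrow> (\<exists>B\<in>\<B>. x \<in> B \<and> B \<subseteq> U)"
    using assms(2) unfolding second_countable_def by blast
  have "normal_space X"
    by (simp add: assms regular_Lindelof_imp_normal_space second_countable_imp_Lindelof_space)
  define P where "P = {(B, B') \<in> \<B> \<times> \<B>. X closure_of B \<subseteq> B'}"
  have "P \<subseteq> \<B> \<times> \<B>"
    unfolding P_def by auto
  then have "countable P"
    by (rule countable_subset) (simp add: \<open>countable \<B>\<close>)
  have "\<exists>g. continuous_map X euclideanreal g \<and> g ` (X closure_of fst p) \<subseteq> {0}
            \<and> g ` (topspace X - snd p) \<subseteq> {1}" if "p \<in> P" for p
  proof -
    obtain B B' where p: "p = (B, B')" "B' \<in> \<B>" "X closure_of B \<subseteq> B'"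
      using \<open>p \<in> P\<close> unfolding P_def by blast
    then obtain g where "continuous_map X euclideanreal g"
      "g ` (X closure_of B) \<subseteq> {0}" "g ` (topspace X - B') \<subseteq> {1}"
      using Urysohn_function_closure_of_subset[OF \<open>normal_space X\<close>] open_\<B> by metis
    then show ?thesis
      using p(1) by auto
  qed
  then obtain f where f: "\<And>p. p \<in> P \<Longrightarrow> continuous_map X euclideanreal (f p)
      \<and> f p ` (X closure_of fst p) \<subseteq> {0} \<and> f p ` (topspace X - snd p) \<subseteq> {1}"
    by metis
  have separating: "\<exists>p\<in>P. f p x = 0 \<and> (\<forall>y \<in> topspace X - U. f p y = 1)"
    if "openin X U" "x \<in> U" for U x
  proof -
    obtain B B' where B: "B \<in> \<B>" "B' \<in> \<B>" "x \<in> B" "X closure_of B \<subseteq> B'" "B' \<subseteq> U"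
      using regular_space_base_closure_pair[OF assms(1) open_\<B> base \<open>openin X U\<close> \<open>x \<in> U\<close>] .
    then have "(B, B') \<in> P"
      unfolding P_def by auto
    have "B \<subseteq> topspace X"
      using open_\<B> B(1) openin_subset by blast
    then have "x \<in> X closure_of B"
      using closure_of_subset B(3) by blast
    then have "f (B, B') x = 0"
      using f[OF \<open>(B, B') \<in> P\<close>] by fastforce
    moreover have "\<forall>y \<in> topspace X - U. f (B, B') y = 1"
      using f[OF \<open>(B, B') \<in> P\<close>] B(5) by fastforce
    ultimately show ?thesis
      using \<open>(B, B') \<in> P\<close> by blast
  qed
  show ?thesis
  proof (rule that[OF \<open>countable P\<close>])
    show "\<And>p. p \<in> P \<Longrightarrow> continuous_map X euclideanreal (f p)"
      using f by blast
  qed (fact separating)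
qed

lemma Urysohn_metrization:
  fixes X :: "'a topology"
  assumes "regular_space X" "second_countable X" "t0_space X"
  shows "metrizable_space X"
proof -
  obtain P :: "('a set \<times> 'a set) set" and f where "countable P"
    and cont: "\<And>p. p \<in> P \<Longrightarrow> continuous_map X euclideanreal (f p)"
    and sep: "\<And>U x. \<lbrakk>openin X U; x \<in> U\<rbrakk> \<Longrightarrow> \<exists>p\<in>P. f p x = 0 \<and> (\<forall>y \<in> topspace X - U. f p y = 1)"
    using regular_second_countable_separating_functions[OF assms(1,2)] by blast
  have "metrizable_space (product_topology (\<lambda>_. euclideanreal) P)"
    using \<open>countable P\<close> by (simp add: metrizable_space_product_topology metrizable_space_euclidean)
  then show ?thesis
    using embedding_map_separating_functions[OF assms(3) cont sep]
    by (meson embedding_map_imp_homeomorphic_space homeomorphic_metrizable_space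
        metrizable_space_subtopology)
qed

section \<open>The topology \<open>tauA A\<close>\<close>

lemma mem_Pn [simp]: "x \<in> Pn \<longleftrightarrow> snd x > 0"
  by (simp add: Pn_def)

lemma mem_Ln [simp]: "x \<in> Ln \<longleftrightarrow> snd x = 0"
  by (simp add: Ln_def)

lemma mem_Xn [simp]: "x \<in> Xn \<longleftrightarrow> snd x \<ge> 0"
  by (auto simp: Xn_def)

lemma dist_Pair_squared:
  fixes x y :: "'a::metric_space" and s t :: real
  shows "(dist (x, s) (y, t))\<^sup>2 = (dist x y)\<^sup>2 + (s - t)\<^sup>2"
  by (simp add: dist_Pair_Pair dist_real_def power2_abs)

lemma ball_subset_Pn: "r \<le> snd c \<Longrightarrow> ball c r \<subseteq> Pn"
proof
  fix y assume "r \<le> snd c" "y \<in> ball c r"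
  then show "y \<in> Pn"
    using dist_snd_le[of c y] by (simp add: dist_real_def)
qed

lemma tball_mono:
  assumes "d \<le> e"
  shows "tball a d \<subseteq> tball a e"
proof -
  have "dist (fst a, d) (fst a, e) + d \<le> e"
    using assms by (simp add: dist_Pair_Pair dist_real_def)
  then have "ball (fst a, d) d \<subseteq> ball (fst a, e) e"
    by (simp add: ball_subset_ball_iff)
  then show ?thesis
    unfolding tball_def by blast
qed

lemma tball_subset_ball:
  assumes "snd a = 0" "0 < e"
  shows "tball a e \<subseteq> ball a (2 * e)"
proof -
  have "a = (fst a, 0)"
    using assms(1) by (simp add: prod_eq_iff)
  then have "dist (fst a, e) a = dist (fst a, e) (fst a, 0)"
    by metis
  also have "\<dots> = e"
    using assms(2) by (simp add: dist_Pair_Pair dist_real_def)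
  finally have "dist (fst a, e) a + e \<le> 2 * e"
    by simp
  then have "ball (fst a, e) e \<subseteq> ball a (2 * e)"
    by (simp add: ball_subset_ball_iff)
  then show ?thesis
    using assms(2) unfolding tball_def by simp
qed

lemma tball_Int_Ln: "a \<in> Ln \<Longrightarrow> tball a e \<inter> Ln = {a}"
  using ball_subset_Pn[of e "(fst a, e)"] unfolding tball_def by auto

text \<open>Basic neighbourhoods of radius \<open>e\<close>; for \<open>a \<in> Pn\<close> and \<open>e < snd a\<close> the second
  branch is the Euclidean ball of the definition of \<open>tauA\<close>.\<close>
definition tauA_ball :: "((real^'m) \<times> real) set \<Rightarrow> (real^'m) \<times> real \<Rightarrow> real \<Rightarrow> ((real^'m) \<times> real) set"
  where "tauA_ball A a e = (if a \<in> Ln - A then tball a e else ball a e \<inter> Xn)"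

lemma tauA_ball_mono: "d \<le> e \<Longrightarrow> tauA_ball A a d \<subseteq> tauA_ball A a e"
  unfolding tauA_ball_def using tball_mono[of d e a] subset_ball[of d e a] by auto

lemma centre_in_tauA_ball: "a \<in> Xn \<Longrightarrow> 0 < e \<Longrightarrow> a \<in> tauA_ball A a e"
  by (simp add: tauA_ball_def tball_def)

lemma tauA_ball_subset_Xn: "tauA_ball A a e \<subseteq> Xn"
  using ball_subset_Pn[of e "(fst a, e)"] by (auto simp: tauA_ball_def tball_def)

lemma tauA_ball_subset_ball: "0 < e \<Longrightarrow> tauA_ball A a e \<subseteq> ball a (2 * e)"
  using tball_subset_ball[of a e] by (auto simp: tauA_ball_def)

lemma ex_basic_nbhd_subset_iff:
  assumes "A \<subseteq> Ln" "x \<in> Xn"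
  shows "(\<exists>V. basic_nbhd A x V \<and> V \<subseteq> U) \<longleftrightarrow> (\<exists>e>0. tauA_ball A x e \<subseteq> U)"
proof
  assume "\<exists>V. basic_nbhd A x V \<and> V \<subseteq> U"
  then obtain V where "basic_nbhd A x V" "V \<subseteq> U"
    by blast
  then consider e where "x \<in> Pn" "0 < e" "V = ball x e"
    | e where "x \<in> A" "0 < e" "V = ball x e \<inter> Xn"
    | e where "x \<in> Ln - A" "0 < e" "V = tball x e"
    unfolding basic_nbhd_def by blast
  then show "\<exists>e>0. tauA_ball A x e \<subseteq> U"
    using \<open>V \<subseteq> U\<close> assms(1) unfolding tauA_ball_def by cases auto
next
  assume "\<exists>e>0. tauA_ball A x e \<subseteq> U"
  then obtain e where "0 < e" "tauA_ball A x e \<subseteq> U"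
    by blast
  consider "x \<in> Pn" | "x \<in> Ln"
    using assms(2) by force
  then show "\<exists>V. basic_nbhd A x V \<and> V \<subseteq> U"
  proof cases
    case 1
    define d where "d = min e (snd x / 2)"
    have "0 < d" "d < snd x"
      using 1 \<open>0 < e\<close> unfolding d_def by auto
    then have "basic_nbhd A x (ball x d)"
      using 1 unfolding basic_nbhd_def by blast
    moreover have "ball x d \<subseteq> tauA_ball A x e"
      using 1 ball_subset_Pn[of d x] \<open>d < snd x\<close> unfolding tauA_ball_def d_def by auto
    ultimately show ?thesis
      using \<open>tauA_ball A x e \<subseteq> U\<close> by blast
  next
    case 2
    then have "basic_nbhd A x (tauA_ball A x e)"
      using \<open>0 < e\<close> unfolding basic_nbhd_def tauA_ball_def by auto
    then show ?thesis
      using \<open>tauA_ball A x e \<subseteq> U\<close> by blast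
  qed
qed

lemma openin_tauA:
  assumes "A \<subseteq> Ln"
  shows "openin (tauA A) U \<longleftrightarrow> U \<subseteq> Xn \<and> (\<forall>x\<in>U. \<exists>e>0. tauA_ball A x e \<subseteq> U)"
proof -
  define open_tauA where "open_tauA U \<longleftrightarrow> U \<subseteq> Xn \<and> (\<forall>x\<in>U. \<exists>e>0. tauA_ball A x e \<subseteq> U)" for U
  have "tauA A = topology open_tauA"
    unfolding tauA_def open_tauA_def using ex_basic_nbhd_subset_iff[OF assms]
    by (metis (no_types, opaque_lifting) subsetD)
  moreover have "istopology open_tauA"
    unfolding istopology_def
  proof (intro conjI allI impI)
    fix S T assume "open_tauA S" "open_tauA T"
    show "open_tauA (S \<inter> T)"
      unfolding open_tauA_def
    proof (intro conjI ballI)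
      show "S \<inter> T \<subseteq> Xn"
        using \<open>open_tauA S\<close> unfolding open_tauA_def by blast
      fix x assume "x \<in> S \<inter> T"
      then obtain d e where "0 < d" "tauA_ball A x d \<subseteq> S" "0 < e" "tauA_ball A x e \<subseteq> T"
        using \<open>open_tauA S\<close> \<open>open_tauA T\<close> unfolding open_tauA_def by blast
      then show "\<exists>r>0. tauA_ball A x r \<subseteq> S \<inter> T"
        using tauA_ball_mono[of "min d e" d A x] tauA_ball_mono[of "min d e" e A x]
        by (intro exI[of _ "min d e"]) auto
    qed
  next
    fix \<K> assume "\<forall>S\<in>\<K>. open_tauA S"
    then show "open_tauA (\<Union>\<K>)"
      unfolding open_tauA_def by (meson Union_least Union_upper order_trans UnionE)
  qed
  ultimately show ?thesis
    by (simp add: open_tauA_def)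
qed

lemma tauA_ball_subset_open:
  assumes "open S" "x \<in> S"
  obtains e where "0 < e" "tauA_ball A x e \<subseteq> S"
proof -
  obtain r where "0 < r" "ball x r \<subseteq> S"
    using assms open_contains_ball by blast
  then show ?thesis
    using that[of "r / 2"] tauA_ball_subset_ball[of "r / 2" A x] by simp
qed

lemma openin_tauA_Int_Xn:
  assumes "A \<subseteq> Ln" "open S"
  shows "openin (tauA A) (S \<inter> Xn)"
  unfolding openin_tauA[OF assms(1)]
proof (intro conjI ballI)
  fix x assume "x \<in> S \<inter> Xn"
  then obtain e where "0 < e" "tauA_ball A x e \<subseteq> S"
    using tauA_ball_subset_open[OF assms(2)] by blast
  then show "\<exists>e>0. tauA_ball A x e \<subseteq> S \<inter> Xn"
    using tauA_ball_subset_Xn by blast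
qed simp

lemma topspace_tauA:
  assumes "A \<subseteq> Ln"
  shows "topspace (tauA A) = Xn"
proof
  show "topspace (tauA A) \<subseteq> Xn"
    using openin_tauA[OF assms, of "topspace (tauA A)"] by simp
  show "Xn \<subseteq> topspace (tauA A)"
    using openin_subset openin_tauA_Int_Xn[OF assms open_UNIV] by fastforce
qed

lemma openin_tauA_ball:
  assumes "A \<subseteq> Ln" "0 < e"
  shows "openin (tauA A) (tauA_ball A a e)"
proof (cases "a \<in> Ln - A")
  case True
  have "\<exists>d>0. tauA_ball A y d \<subseteq> tball a e" if "y \<in> tball a e" for y
  proof (cases "y = a")
    case True
    then show ?thesis
      using \<open>a \<in> Ln - A\<close> \<open>0 < e\<close> unfolding tauA_ball_def by auto
  next
    case False
    then have "y \<in> ball (fst a, e) e"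
      using that unfolding tball_def by blast
    then obtain d where "0 < d" "tauA_ball A y d \<subseteq> ball (fst a, e) e"
      using tauA_ball_subset_open[OF open_ball] by blast
    then show ?thesis
      unfolding tball_def by blast
  qed
  then show ?thesis
    using True tauA_ball_subset_Xn[of A a e] unfolding openin_tauA[OF assms(1)] tauA_ball_def
    by simp
next
  case False
  show ?thesis
    unfolding tauA_ball_def if_not_P[OF False] by (rule openin_tauA_Int_Xn[OF assms(1) open_ball])
qed

lemma Xn_Int_closure_tball:
  assumes "0 < e"
  shows "Xn \<inter> closure (tball (c, 0) e) \<subseteq> tball (c, 0) (2 * e)"
proof
  fix z assume z: "z \<in> Xn \<inter> closure (tball (c, 0) e)"
  obtain x t where [simp]: "z = (x, t)"
    by fastforce
  show "z \<in> tball (c, 0) (2 * e)"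
  proof (cases "z = (c, 0)")
    case False
    then have "dist (c, e) (x, t) \<le> e" "t \<ge> 0"
      using z assms unfolding tball_def by (auto simp: closure_insert)
    then have close: "(dist c x)\<^sup>2 + (e - t)\<^sup>2 \<le> e\<^sup>2"
      by (metis dist_Pair_squared power_mono zero_le_dist)
    have "t \<noteq> 0"
    proof
      assume "t = 0"
      then have "dist c x = 0"
        using close by simp
      then show False
        using False \<open>t = 0\<close> by simp
    qed
    then have "0 < e * t"
      using \<open>t \<ge> 0\<close> assms by simp
    moreover have "(2 * e - t)\<^sup>2 = (e - t)\<^sup>2 + 3 * e\<^sup>2 - 2 * (e * t)"
      by (simp add: power2_eq_square algebra_simps)
    ultimately have "(dist (c, 2 * e) (x, t))\<^sup>2 < (2 * e)\<^sup>2"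
      using close unfolding dist_Pair_squared by (simp add: power_mult_distrib)
    then have "dist (c, 2 * e) (x, t) < 2 * e"
      using power_less_imp_less_base[of _ 2 "2 * e"] assms by simp
    then show ?thesis
      unfolding tball_def by simp
  qed (simp add: tball_def)
qed

lemma Xn_Int_closure_tauA_ball:
  assumes "a \<in> Xn" "0 < e"
  shows "Xn \<inter> closure (tauA_ball A a e) \<subseteq> tauA_ball A a (2 * e)"
proof (cases "a \<in> Ln - A")
  case True
  then have "a = (fst a, 0)"
    by (simp add: prod_eq_iff)
  then show ?thesis
    using True Xn_Int_closure_tball[OF assms(2), of "fst a"] unfolding tauA_ball_def by simp
next
  case False
  have "closure (ball a e \<inter> Xn) \<subseteq> cball a e"
    using closure_mono[of "ball a e \<inter> Xn" "ball a e"] assms(2) by simp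
  moreover have "cball a e \<subseteq> ball a (2 * e)"
    using assms(2) by (simp add: subset_eq)
  ultimately show ?thesis
    unfolding tauA_ball_def if_not_P[OF False] by blast
qed

lemma tauA_closure_of_subset:
  assumes "A \<subseteq> Ln" "S \<subseteq> Xn"
  shows "tauA A closure_of S \<subseteq> Xn \<inter> closure S"
proof (rule closure_of_minimal)
  show "S \<subseteq> Xn \<inter> closure S"
    using assms(2) closure_subset by blast
  have "topspace (tauA A) - Xn \<inter> closure S = - closure S \<inter> Xn"
    using topspace_tauA[OF assms(1)] by blast
  then show "closedin (tauA A) (Xn \<inter> closure S)"
    unfolding closedin_def using topspace_tauA[OF assms(1)] openin_tauA_Int_Xn[OF assms(1)]
    by (simp add: open_Compl)
qed

lemma t1_space_tauA:
  fixes A :: "((real^'m) \<times> real) set"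
  assumes "A \<subseteq> Ln"
  shows "t1_space (tauA A)"
  unfolding t1_space_def topspace_tauA[OF assms]
proof (intro ballI impI)
  fix x y :: "(real^'m) \<times> real" assume "x \<in> Xn" "y \<in> Xn" "x \<noteq> y"
  then have "0 < dist x y / 2"
    by simp
  then have "x \<in> tauA_ball A x (dist x y / 2)" "y \<notin> tauA_ball A x (dist x y / 2)"
    using centre_in_tauA_ball[OF \<open>x \<in> Xn\<close>] tauA_ball_subset_ball[of "dist x y / 2" A x] by auto
  then show "\<exists>U. openin (tauA A) U \<and> x \<in> U \<and> y \<notin> U"
    using openin_tauA_ball[OF assms \<open>0 < dist x y / 2\<close>] by blast
qed

lemma regular_space_tauA:
  assumes "A \<subseteq> Ln"
  shows "regular_space (tauA A)"
  unfolding neighbourhood_base_of_closedin[symmetric] neighbourhood_base_of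
proof (intro allI impI, elim conjE)
  fix W x assume "openin (tauA A) W" "x \<in> W"
  then have "x \<in> Xn"
    using openin_tauA[OF assms] by blast
  obtain e where "0 < e" "tauA_ball A x e \<subseteq> W"
    using openin_tauA[OF assms] \<open>openin (tauA A) W\<close> \<open>x \<in> W\<close> by blast
  define U where "U = tauA_ball A x (e / 2)"
  have "openin (tauA A) U" "x \<in> U"
    unfolding U_def using \<open>0 < e\<close> \<open>x \<in> Xn\<close> by (simp_all add: openin_tauA_ball[OF assms] centre_in_tauA_ball)
  moreover have "U \<subseteq> tauA A closure_of U"
    using closure_of_subset openin_subset[OF \<open>openin (tauA A) U\<close>] by blast
  moreover have "tauA A closure_of U \<subseteq> W"
  proof -
    have "tauA A closure_of U \<subseteq> Xn \<inter> closure U"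
      unfolding U_def by (rule tauA_closure_of_subset[OF assms tauA_ball_subset_Xn])
    also have "\<dots> \<subseteq> tauA_ball A x (2 * (e / 2))"
      unfolding U_def using Xn_Int_closure_tauA_ball[OF \<open>x \<in> Xn\<close>, of "e / 2" A] \<open>0 < e\<close> by simp
    finally show ?thesis
      using \<open>tauA_ball A x e \<subseteq> W\<close> by simp
  qed
  ultimately show "\<exists>U V. openin (tauA A) U \<and> closedin (tauA A) V \<and> x \<in> U \<and> U \<subseteq> V \<and> V \<subseteq> W"
    using closedin_closure_of by blast
qed

lemma ball_subset_tauA_ball:
  assumes "a \<in> Xn" "0 < e"
  shows "ball (fst a, snd a + e / 2) (e / 2) \<subseteq> tauA_ball A a e"
proof (cases "a \<in> Ln - A")
  case True
  then have "ball (fst a, snd a + e / 2) (e / 2) \<subseteq> tball a e"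
    using tball_mono[of "e / 2" e a] assms(2) unfolding tball_def by auto
  then show ?thesis
    using True unfolding tauA_ball_def by simp
next
  case False
  have "dist (fst a, snd a + e / 2) a + e / 2 \<le> e"
    using assms(2) dist_Pair_Pair[of "fst a" _ "fst a" "snd a"] by (simp add: dist_real_def)
  then have "ball (fst a, snd a + e / 2) (e / 2) \<subseteq> ball a e"
    by (simp add: ball_subset_ball_iff)
  moreover have "ball (fst a, snd a + e / 2) (e / 2) \<subseteq> Xn"
    using ball_subset_Pn[of "e / 2" "(fst a, snd a + e / 2)"] assms(1) by auto
  ultimately show ?thesis
    unfolding tauA_ball_def if_not_P[OF False] by blast
qed

lemma separable_space_tauA:
  fixes A :: "((real^'m) \<times> real) set"
  assumes "A \<subseteq> Ln"
  shows "separable_space (tauA A)"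
proof -
  obtain D :: "((real^'m) \<times> real) set" where "countable D"
    and D: "\<And>S. open S \<Longrightarrow> S \<noteq> {} \<Longrightarrow> \<exists>d\<in>D. d \<in> S"
    by (rule countable_dense_setE) blast
  have "x \<in> tauA A closure_of (D \<inter> Xn)" if x: "x \<in> Xn" for x
    unfolding in_closure_of topspace_tauA[OF assms]
  proof (intro conjI allI impI, fact, elim conjE)
    fix T assume "x \<in> T" "openin (tauA A) T"
    then obtain e where "0 < e" "tauA_ball A x e \<subseteq> T"
      using openin_tauA[OF assms] by blast
    obtain d where "d \<in> D" "d \<in> ball (fst x, snd x + e / 2) (e / 2)"
      using D[OF open_ball, of "(fst x, snd x + e / 2)" "e / 2"] \<open>0 < e\<close> by auto
    then have "d \<in> tauA_ball A x e"
      using ball_subset_tauA_ball[OF x \<open>0 < e\<close>, of A] by blast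
    then show "\<exists>y. y \<in> D \<inter> Xn \<and> y \<in> T"
      using \<open>d \<in> D\<close> \<open>tauA_ball A x e \<subseteq> T\<close> tauA_ball_subset_Xn[of A x e] by blast
  qed
  then have "topspace (tauA A) \<subseteq> tauA A closure_of (D \<inter> Xn)"
    unfolding topspace_tauA[OF assms] by blast
  then have "tauA A closure_of (D \<inter> Xn) = topspace (tauA A)"
    by (simp add: closure_of_subset_topspace subset_antisym)
  then show ?thesis
    unfolding separable_space_def using \<open>countable D\<close> topspace_tauA[OF assms]
    by (intro exI[of _ "D \<inter> Xn"]) simp
qed

lemma second_countable_tauA:
  fixes A :: "((real^'m) \<times> real) set"
  assumes "A \<subseteq> Ln" "countable (Ln - A)"
  shows "second_countable (tauA A)"
proof -
  obtain \<B> :: "((real^'m) \<times> real) set set" where "countable \<B>" "topological_basis \<B>"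
    using ex_countable_basis by blast
  define \<C> where "\<C> = (\<lambda>B. B \<inter> Xn) ` \<B> \<union> (\<lambda>(a, k). tauA_ball A a (inverse (Suc k))) ` ((Ln - A) \<times> UNIV)"
  have "countable \<C>"
    unfolding \<C>_def using \<open>countable \<B>\<close> assms(2) by simp
  moreover have "\<forall>C\<in>\<C>. openin (tauA A) C"
    using openin_tauA_Int_Xn[OF assms(1) topological_basis_open[OF \<open>topological_basis \<B>\<close>]]
      openin_tauA_ball[OF assms(1)] unfolding \<C>_def by auto
  moreover have "\<exists>C\<in>\<C>. x \<in> C \<and> C \<subseteq> U" if "openin (tauA A) U" "x \<in> U" for U x
  proof -
    obtain e where "0 < e" "tauA_ball A x e \<subseteq> U" "x \<in> Xn"
      using openin_tauA[OF assms(1)] \<open>openin (tauA A) U\<close> \<open>x \<in> U\<close> by blast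
    show ?thesis
    proof (cases "x \<in> Ln - A")
      case True
      obtain k :: nat where "inverse (Suc k) < e"
        using reals_Archimedean[OF \<open>0 < e\<close>] by blast
      then have "tauA_ball A x (inverse (Suc k)) \<subseteq> U"
        using tauA_ball_mono[of "inverse (Suc k)" e A x] \<open>tauA_ball A x e \<subseteq> U\<close> by simp
      moreover have "tauA_ball A x (inverse (Suc k)) \<in> \<C>"
        using True unfolding \<C>_def by blast
      ultimately show ?thesis
        using centre_in_tauA_ball[OF \<open>x \<in> Xn\<close>, of "inverse (Suc k)" A] by auto
    next
      case False
      obtain B where "B \<in> \<B>" "x \<in> B" "B \<subseteq> ball x e"
        using topological_basisE[OF \<open>topological_basis \<B>\<close> open_ball centre_in_ball[THEN iffD2, OF \<open>0 < e\<close>]] .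
      then have "B \<inter> Xn \<subseteq> U"
        using \<open>tauA_ball A x e \<subseteq> U\<close> unfolding tauA_ball_def if_not_P[OF False] by blast
      moreover have "B \<inter> Xn \<in> \<C>"
        using \<open>B \<in> \<B>\<close> unfolding \<C>_def by blast
      ultimately show ?thesis
        using \<open>x \<in> B\<close> \<open>x \<in> Xn\<close> by blast
    qed
  qed
  ultimately show ?thesis
    unfolding second_countable_def by blast
qed

lemma metrizable_space_tauA:
  assumes "A \<subseteq> Ln" "countable (Ln - A)"
  shows "metrizable_space (tauA A)"
  using Urysohn_metrization[OF regular_space_tauA[OF assms(1)] second_countable_tauA[OF assms]
      t1_imp_t0_space[OF t1_space_tauA[OF assms(1)]]] .

lemma subtopology_tauA_Ln_Diff:
  assumes "A \<subseteq> Ln"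
  shows "subtopology (tauA A) (Ln - A) = discrete_topology (Ln - A)"
proof -
  have "Ln - A \<subseteq> Xn"
    by auto
  then have "topspace (subtopology (tauA A) (Ln - A)) = Ln - A"
    using topspace_tauA[OF assms] by (simp add: Int_absorb1)
  moreover have "openin (subtopology (tauA A) (Ln - A)) {a}" if a: "a \<in> Ln - A" for a
  proof -
    have "tauA_ball A a 1 = tball a 1"
      using a unfolding tauA_ball_def by (simp only: if_True)
    then have "tauA_ball A a 1 \<inter> (Ln - A) = {a}"
      using a tball_Int_Ln[of a 1] by (auto simp del: mem_Ln)
    moreover have "openin (subtopology (tauA A) (Ln - A)) (tauA_ball A a 1 \<inter> (Ln - A))"
      by (rule openin_subtopology_Int[OF openin_tauA_ball[OF assms zero_less_one]])
    ultimately show ?thesis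
      by simp
  qed
  ultimately have "discrete_topology (Ln - A) = subtopology (tauA A) (Ln - A)"
    by (simp add: discrete_topology_unique)
  then show ?thesis
    by (rule sym)
qed

lemma countable_Ln_Diff_if_hereditarily_Lindelof:
  assumes "A \<subseteq> Ln" "hereditarily_Lindelof (tauA A)"
  shows "countable (Ln - A)"
proof -
  have "Ln - A \<subseteq> topspace (tauA A)"
    unfolding topspace_tauA[OF assms(1)] by auto
  then have "Lindelof_space (discrete_topology (Ln - A))"
    using assms(2) subtopology_tauA_Ln_Diff[OF assms(1)] unfolding hereditarily_Lindelof_def by metis
  then show ?thesis
    by (simp add: Lindelof_space_discrete_topology)
qed

theorem mainTheorem2:
  fixes A :: "((real^'m) \<times> real) set"
  assumes "A \<subseteq> Ln"
  shows "(hereditarily_Lindelof (tauA A) \<longleftrightarrow> countable (Ln - A))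
       \<and> (countable (Ln - A) \<longleftrightarrow> second_countable (tauA A))
       \<and> (countable (Ln - A) \<longleftrightarrow> metrizable_space (tauA A))"
proof -
  have "second_countable (tauA A)" if "metrizable_space (tauA A)"
    using separable_metrizable_imp_second_countable[OF that separable_space_tauA[OF assms]] .
  then show ?thesis
    using countable_Ln_Diff_if_hereditarily_Lindelof[OF assms]
      second_countable_imp_hereditarily_Lindelof[of "tauA A"]
      second_countable_tauA[OF assms] metrizable_space_tauA[OF assms]
    by blast
qed

end
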